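(* Let $h\ge1$, $n$ and $m_{\mathrm H}$ be fixed, let $\gamma=(m_{\mathrm H}/n)^{1/(h+1)}$, and for $i\in\mathbb{N}$ let $(\ell_i,s_i)=(i,\mathrm{round}(\gamma i)+1)$. Then $$t_{\mathrm{new}}(\ell_i,s_i)=n\Big(1-\big(\tfrac{m_{\mathrm H}}{n}\big)^{\frac{h}{h+1}}-O(\tfrac1i)\Big)\quad (i\to\infty),$$ where for positive integers $s\le\ell$, $$t_{\mathrm{new}}(\ell,s)=n\Big(1-\frac{sC_{<s}-W_{<s}}{sC_{\le\ell}}\Big)-\frac{h}{h+1}\frac{\ell}{s}m_{\mathrm H}+\frac1s\Big(\frac{1}{C_{\le\ell}}-1\Big).$$
   Context: Here $q$ is a prime power, $n=q^3$, $g=\tfrac12q(q-1)$, and $m_{\mathrm H}$ is an integer with $2(g-1)<m_{\mathrm H}<n$ (so $0<\gamma<1$); $h\ge1$ is an integer. $\mathrm{round}(x)$ denotes the nearest integer to $x$. Counting quantities (over $\mathbb{Z}_{\ge0}^h$, with $|\mathbf{i}|=\sum_\mu i_\mu$): $C_{\le\ell}=\#\{\mathbf{j}\in\mathbb{Z}_{\ge0}^h:|\mathbf{j}|\le\ell\}$, $C_{<s}=\#\{\mathbf{i}\in\mathbb{Z}_{\ge0}^h:|\mathbf{i}|<s\}$, $W_{<s}=\sum_{\mathbf{i}\in\mathbb{Z}_{\ge0}^h,|\mathbf{i}|<s}|\mathbf{i}|$. *)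

theory Defs
  imports Complex_Main "HOL-Number_Theory.Prime_Powers" "HOL-Library.Landau_Symbols"
begin

text \<open>Points of Z_{>=0}^h are represented as lists of naturals of length h;
  |i| is the sum of the entries.\<close>

definition C_le :: "nat \<Rightarrow> nat \<Rightarrow> nat" where
  "C_le h l = card {j :: nat list. length j = h \<and> sum_list j \<le> l}"

definition C_lt :: "nat \<Rightarrow> nat \<Rightarrow> nat" where
  "C_lt h s = card {i :: nat list. length i = h \<and> sum_list i < s}"

definition W_lt :: "nat \<Rightarrow> nat \<Rightarrow> nat" where
  "W_lt h s = (\<Sum>i\<in>{i :: nat list. length i = h \<and> sum_list i < s}. sum_list i)"

definition t_new :: "nat \<Rightarrow> nat \<Rightarrow> nat \<Rightarrow> nat \<Rightarrow> nat \<Rightarrow> real" where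
  "t_new h n mH l s =
     real n * (1 - (real s * real (C_lt h s) - real (W_lt h s)) / (real s * real (C_le h l)))
     - (real h / real (h + 1)) * (real l / real s) * real mH
     + (1 / real s) * (1 / real (C_le h l) - 1)"

definition gamma :: "nat \<Rightarrow> nat \<Rightarrow> nat \<Rightarrow> real" where
  "gamma h n mH = (real mH / real n) powr (1 / real (h + 1))"

definition s_seq :: "nat \<Rightarrow> nat \<Rightarrow> nat \<Rightarrow> nat \<Rightarrow> nat" where
  "s_seq h n mH i = nat (round (gamma h n mH * real i)) + 1"

end

theory Submission
  imports Defs
begin

(* The numerator s C_{<s} - W_{<s} = \<Sum>_{|i|<s} (s - |i|) counts the lattice points of the
   (h+1)-dimensional simplex of size s - 1, so the main fraction of t_new is a ratio of binomial
   coefficients, (\<Prod>_{j<h} (s+1+j)/(l+1+j)) / (h+1). With s = round(\<gamma> l) + 1 each factor is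
   \<gamma> + O(1/l), so this fraction is \<gamma>^h/(h+1) + O(1/l); since m_H = n \<gamma>^(h+1), the term
   (h/(h+1)) (l/s) m_H equals (h/(h+1)) n \<gamma>^h + O(1/l), and the last term of t_new is O(1/l). *)

lemma card_lists_sum_le:
  "card {j :: nat list. length j = h \<and> sum_list j \<le> l} = (l + h choose h)"
proof -
  have "bij_betw (\<lambda>j. (l - sum_list j) # j)
          {j :: nat list. length j = h \<and> sum_list j \<le> l}
          {xs. length xs = Suc h \<and> sum_list xs = l}"
    by (rule bij_betw_byWitness[where f' = tl]) (auto simp: length_Suc_conv)
  then have "card {j :: nat list. length j = h \<and> sum_list j \<le> l} = (l + h choose l)"
    by (simp add: bij_betw_same_card card_length_sum_list)
  then show ?thesis
    by (simp add: binomial_symmetric[of h "l + h"])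
qed

lemma finite_lists_sum_le: "finite {j :: nat list. length j = h \<and> sum_list j \<le> l}"
  by (rule card_ge_0_finite) (simp add: card_lists_sum_le)

lemma card_lists_sum_le_Suc:
  "card {j :: nat list. length j = Suc h \<and> sum_list j \<le> m}
     = (\<Sum>i | length i = h \<and> sum_list i \<le> m. Suc m - sum_list i)"
proof -
  let ?A = "{i :: nat list. length i = h \<and> sum_list i \<le> m}"
  have fibres: "{j :: nat list. length j = Suc h \<and> sum_list j \<le> m}
                 = (\<Union>i\<in>?A. (\<lambda>x. x # i) ` {..m - sum_list i})"
    by (rule set_eqI) (auto simp: length_Suc_conv)
  have "card {j :: nat list. length j = Suc h \<and> sum_list j \<le> m}
          = (\<Sum>i\<in>?A. card ((\<lambda>x. x # i) ` {..m - sum_list i}))"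
    unfolding fibres by (rule card_UN_disjoint) (auto simp: finite_lists_sum_le)
  also have "\<dots> = (\<Sum>i\<in>?A. Suc m - sum_list i)"
    by (intro sum.cong) (auto simp: card_image inj_on_def Suc_diff_le)
  finally show ?thesis .
qed

lemma C_le_eq_binomial: "C_le h l = (l + h choose h)"
  unfolding C_le_def by (rule card_lists_sum_le)

lemma of_nat_C_le: "real (C_le h l) = pochhammer (real l + 1) h / fact h"
  unfolding C_le_eq_binomial binomial_gbinomial gbinomial_pochhammer' by simp

lemma C_lt_W_lt_eq_C_le_Suc:
  assumes "s \<ge> 1"
  shows "real s * real (C_lt h s) - real (W_lt h s) = real (C_le (Suc h) (s - 1))"
proof -
  have lt_eq_le: "{i :: nat list. length i = h \<and> sum_list i < s}
                    = {i. length i = h \<and> sum_list i \<le> s - 1}"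
    using assms by auto
  have "real s * real (C_lt h s) - real (W_lt h s)
          = (\<Sum>i | length i = h \<and> sum_list i \<le> s - 1. real s - real (sum_list i))"
    unfolding C_lt_def W_lt_def lt_eq_le by (simp add: sum_subtractf)
  also have "\<dots> = (\<Sum>i | length i = h \<and> sum_list i \<le> s - 1. real (Suc (s - 1) - sum_list i))"
    using assms by (intro sum.cong) (auto simp: of_nat_diff)
  finally show ?thesis
    unfolding C_le_def card_lists_sum_le_Suc by simp
qed

lemma C_le_Suc_ratio:
  assumes "s \<ge> 1"
  shows "real (C_le (Suc h) (s - 1)) / (real s * real (C_le h l))
         = (\<Prod>j<h. (real s + 1 + real j) / (real l + 1 + real j)) / (real h + 1)"
proof -
  have "real (s - 1) + 1 = real s"
    using assms by simp
  then have numerator: "real (C_le (Suc h) (s - 1))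
                          = real s * pochhammer (real s + 1) h / ((real h + 1) * fact h)"
    unfolding of_nat_C_le pochhammer_rec by (simp add: algebra_simps)
  have cancel: "(S * P / (H * F)) / (S * (Q / F)) = P / Q / H"
    if "S > 0" "Q > 0" "F > 0" for S P Q H F :: real
    using that by (simp add: field_simps)
  have "real (C_le (Suc h) (s - 1)) / (real s * real (C_le h l))
          = pochhammer (real s + 1) h / pochhammer (real l + 1) h / (real h + 1)"
    unfolding numerator of_nat_C_le[of h l] using assms
    by (intro cancel) (simp_all add: pochhammer_pos)
  then show ?thesis
    by (simp add: pochhammer_prod prod_dividef atLeast0LessThan add_ac)
qed

lemma t_new_error_split:
  fixes g :: real
  assumes s: "s \<ge> 1" and n: "n > 0" and mH: "real mH = real n * g ^ (h + 1)"
  shows "1 - g ^ h - t_new h n mH l s / real n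
           = ((\<Prod>j<h. (real s + 1 + real j) / (real l + 1 + real j)) - g ^ h) / (real h + 1)
             + real h / real (h + 1) * g ^ h * ((g * real l - real s) / real s)
             - 1 / (real n * real s) * (1 / real (C_le h l) - 1)"
proof -
  define P where "P = (\<Prod>j<h. (real s + 1 + real j) / (real l + 1 + real j))"
  define D where "D = 1 / real (C_le h l) - 1"
  have t_new_eq: "t_new h n mH l s = real n * (1 - P / (real h + 1))
          - real h / real (h + 1) * (real l / real s) * (real n * g ^ (h + 1)) + 1 / real s * D"
    unfolding t_new_def C_lt_W_lt_eq_C_le_Suc[OF s] C_le_Suc_ratio[OF s] mH P_def D_def ..
  define e where "e = 1 / (real h + 1)"
  have "real h / real (h + 1) = 1 - e" "P / (real h + 1) = P * e"
       "(P - g ^ h) / (real h + 1) = (P - g ^ h) * e"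
    unfolding e_def by (simp_all add: field_simps)
  moreover have "real s > 0" "real n > 0"
    using s n by simp_all
  ultimately show ?thesis
    unfolding P_def[symmetric] D_def[symmetric] t_new_eq by (simp only:) (simp add: field_simps)
qed

lemma abs_prod_diff_le:
  fixes a b :: "'i \<Rightarrow> real"
  assumes "M \<ge> 1" "\<And>i. i \<in> I \<Longrightarrow> \<bar>a i\<bar> \<le> M" "\<And>i. i \<in> I \<Longrightarrow> \<bar>b i\<bar> \<le> M"
  shows "\<bar>prod a I - prod b I\<bar> \<le> M ^ card I * (\<Sum>i\<in>I. \<bar>a i - b i\<bar>)"
proof -
  have M: "M > 0" using assms(1) by simp
  have "\<bar>(\<Prod>i\<in>I. a i / M) - (\<Prod>i\<in>I. b i / M)\<bar> \<le> (\<Sum>i\<in>I. \<bar>a i / M - b i / M\<bar>)"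
    using norm_prod_diff[of I "\<lambda>i. a i / M" "\<lambda>i. b i / M"] assms M
    by (simp add: abs_div)
  then have "\<bar>prod a I - prod b I\<bar> / M ^ card I \<le> (\<Sum>i\<in>I. \<bar>a i - b i\<bar>) / M"
    using M by (simp add: prod_dividef diff_divide_distrib[symmetric] abs_div
        sum_divide_distrib[symmetric])
  also have "\<dots> \<le> (\<Sum>i\<in>I. \<bar>a i - b i\<bar>)"
    using divide_left_mono[OF assms(1), of "\<Sum>i\<in>I. \<bar>a i - b i\<bar>"] M
    by (simp add: sum_nonneg)
  finally show ?thesis
    using M by (simp add: divide_le_eq mult.commute)
qed

lemma shifted_ratio_bounds:
  fixes g s l j :: real
  assumes g: "0 < g" "g \<le> 1" and l: "l \<ge> 1" and j: "0 \<le> j" "j \<le> k"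
    and s: "g * l \<le> s" "s \<le> g * l + 3 / 2"
  shows "\<bar>(s + 1 + j) / (l + 1 + j)\<bar> \<le> 3"
    and "\<bar>(s + 1 + j) / (l + 1 + j) - g\<bar> \<le> (k + 3) / l"
proof -
  have gl: "g * l \<le> l"
    using g l by (simp add: mult_left_le_one_le)
  have pos: "l + 1 + j > 0"
    using l j by simp
  have "0 \<le> g * l"
    using g l by simp
  have "0 \<le> s + 1 + j"
    using j s \<open>0 \<le> g * l\<close> by linarith
  moreover have "s + 1 + j \<le> 3 * (l + 1 + j)"
    using l j s gl by argo
  ultimately show "\<bar>(s + 1 + j) / (l + 1 + j)\<bar> \<le> 3"
    using pos by (simp add: divide_le_eq)
  have "(s + 1 + j) / (l + 1 + j) - g = ((s - g * l) + (1 - g) * (1 + j)) / (l + 1 + j)"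
    using pos by (simp add: field_simps)
  moreover have "\<bar>(s - g * l) + (1 - g) * (1 + j)\<bar> \<le> k + 3"
  proof -
    have "\<bar>(1 - g) * (1 + j)\<bar> \<le> 1 + j"
      using g j by (simp add: abs_mult mult_left_le_one_le)
    then show ?thesis
      using s j by linarith
  qed
  ultimately show "\<bar>(s + 1 + j) / (l + 1 + j) - g\<bar> \<le> (k + 3) / l"
    using pos l j by (simp add: abs_div frac_le)
qed

lemma t_new_error_bound:
  fixes g :: real
  assumes g: "0 < g" "g \<le> 1" and l: "l \<ge> 1" and n: "n \<ge> 1"
    and s: "g * real l \<le> real s" "real s \<le> g * real l + 3 / 2"
    and mH: "real mH = real n * g ^ (h + 1)"
  shows "\<bar>1 - g ^ h - t_new h n mH l s / real n\<bar>
           \<le> (3 ^ h * real h * (real h + 3) + 5 / (2 * g)) / real l"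
proof -
  define a where "a j = (real s + 1 + real j) / (real l + 1 + real j)" for j :: nat
  have gl: "g * real l > 0"
    using g l by simp
  then have s1: "s \<ge> 1"
    using s by simp
  have n0: "n > 0"
    using n by simp
  have inv_s: "1 / real s \<le> 1 / (g * real l)"
    using s gl by (simp add: frac_le)
  have factor: "\<bar>a j\<bar> \<le> 3" "\<bar>a j - g\<bar> \<le> (real h + 3) / real l" if "j < h" for j
    unfolding a_def using g l s that
    by (intro shifted_ratio_bounds[where k = "real h"]; simp)+
  have "\<bar>prod a {..<h} - (\<Prod>j<h. g)\<bar> \<le> 3 ^ card {..<h} * (\<Sum>j<h. \<bar>a j - g\<bar>)"
    using g factor by (intro abs_prod_diff_le) auto
  also have "\<dots> \<le> 3 ^ h * (\<Sum>j<h. (real h + 3) / real l)"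
    unfolding card_lessThan using factor by (intro mult_left_mono sum_mono) auto
  finally have "\<bar>prod a {..<h} - g ^ h\<bar> \<le> 3 ^ h * real h * (real h + 3) / real l"
    by simp
  then have first: "\<bar>(prod a {..<h} - g ^ h) / (real h + 1)\<bar> \<le> 3 ^ h * real h * (real h + 3) / real l"
    using divide_left_mono[of 1 "real h + 1" "\<bar>prod a {..<h} - g ^ h\<bar>"] by (simp add: abs_div)
  have "\<bar>real h / real (h + 1) * g ^ h * ((g * real l - real s) / real s)\<bar>
          \<le> 1 * 1 * (3 / 2 * (1 / real s))"
    unfolding abs_mult using g s s1
    by (intro mult_mono) (auto simp: abs_div power_le_one divide_le_eq)
  also have "\<dots> \<le> 3 / (2 * g) / real l"
    using inv_s by simp
  finally have second: "\<bar>real h / real (h + 1) * g ^ h * ((g * real l - real s) / real s)\<bar>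
                          \<le> 3 / (2 * g) / real l" .
  have C1: "real (C_le h l) \<ge> 1"
    unfolding C_le_eq_binomial by (simp add: Suc_leI)
  have "1 / (real n * real s) \<le> 1 / real s"
    using n s1 by (simp add: frac_le)
  then have "\<bar>1 / (real n * real s) * (1 / real (C_le h l) - 1)\<bar> \<le> 1 / real s * 1"
    unfolding abs_mult using C1 n s1 by (intro mult_mono) (auto simp: divide_le_eq)
  also have "\<dots> \<le> 1 / g / real l"
    using inv_s by simp
  finally have third: "\<bar>1 / (real n * real s) * (1 / real (C_le h l) - 1)\<bar> \<le> 1 / g / real l" .
  have "\<bar>1 - g ^ h - t_new h n mH l s / real n\<bar>
          \<le> 3 ^ h * real h * (real h + 3) / real l + 3 / (2 * g) / real l + 1 / g / real l"
    using first second third unfolding t_new_error_split[OF s1 n0 mH] a_def[symmetric]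
    by (simp only: abs_le_iff) linarith
  also have "\<dots> = (3 ^ h * real h * (real h + 3) + 5 / (2 * g)) / real l"
    using g l by (simp add: field_simps)
  finally show ?thesis .
qed

lemma round_Suc_bounds:
  fixes x :: real
  assumes "0 \<le> x"
  shows "x \<le> real (nat (round x) + 1)" and "real (nat (round x) + 1) \<le> x + 3 / 2"
proof -
  have "\<bar>of_int (round x) - x\<bar> \<le> 1 / 2"
    by (rule of_int_round_abs_le)
  moreover have "real (nat (round x)) = of_int (round x)"
    using round_mono[OF assms] by simp
  ultimately show "x \<le> real (nat (round x) + 1)" "real (nat (round x) + 1) \<le> x + 3 / 2"
    by linarith+
qed

lemma gamma_bounds:
  assumes "0 < mH" "mH < n"
  shows "0 < gamma h n mH" and "gamma h n mH < 1"
  using assms powr_less_mono2[of "1 / real (h + 1)" "real mH / real n" 1]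
  unfolding gamma_def by simp_all

lemma gamma_power:
  assumes "0 < mH" "0 < n"
  shows "gamma h n mH ^ k = (real mH / real n) powr (real k / real (h + 1))"
  using assms unfolding gamma_def by (simp add: powr_realpow[symmetric] powr_powr)

theorem theorem5:
  fixes q n h mH :: nat
  assumes "primepow q"
    and "n = q ^ 3"
    and "2 * (real q * (real q - 1) / 2 - 1) < real mH"
    and "mH < n"
    and "h \<ge> 1"
  shows "\<exists>e :: nat \<Rightarrow> real. e \<in> O(\<lambda>i. 1 / real i) \<and>
           (\<forall>\<^sub>F i in at_top.
              t_new h n mH i (s_seq h n mH i)
                = real n * (1 - (real mH / real n) powr (real h / real (h + 1)) - e i))"
proof -
  have "q \<ge> 2"
    using primepow_gt_Suc_0[OF assms(1)] by simp
  then have "real q * (real q - 1) \<ge> 2"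
    using mult_mono[of 2 "real q" 1 "real q - 1"] by simp
  then have mH: "0 < mH"
    using assms(3) by simp
  have n: "0 < n"
    using assms(4) by simp
  define g where "g = gamma h n mH"
  have g: "0 < g" "g < 1"
    unfolding g_def using gamma_bounds[OF mH assms(4)] by auto
  have mH_eq: "real mH = real n * g ^ (h + 1)"
    using mH n unfolding g_def gamma_power[OF mH n] by simp
  define e where "e i = 1 - g ^ h - t_new h n mH i (s_seq h n mH i) / real n" for i
  define C where "C = 3 ^ h * real h * (real h + 3) + 5 / (2 * g)"
  have "\<bar>e i\<bar> \<le> C * \<bar>1 / real i\<bar>" if "i \<ge> 1" for i
    using t_new_error_bound[OF g(1) _ that _ _ _ mH_eq, of "s_seq h n mH i"]
      round_Suc_bounds[of "g * real i"] g that n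
    unfolding e_def C_def s_seq_def g_def[symmetric] by simp
  then have "e \<in> O(\<lambda>i. 1 / real i)"
    by (intro bigoI[of _ C] eventually_mono[OF eventually_ge_at_top[of 1]]) auto
  moreover have "t_new h n mH i (s_seq h n mH i)
                   = real n * (1 - (real mH / real n) powr (real h / real (h + 1)) - e i)" for i
    using n unfolding e_def gamma_power[OF mH n, symmetric] g_def by simp
  ultimately show ?thesis
    by (intro exI[of _ e] conjI always_eventually) auto
qed

end
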